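(* Uniform (vanilla) federation is modular. That is, with $\mu_e>0,\sigma^2>0$ and error $$err_j(C)=\frac{\mu_e}{\sum_{i\in C}n_i}+\sigma^2\cdot\frac{\sum_{i\in C,i\neq j}n_i^2+\left(\sum_{i\in C,i\neq j}n_i\right)^2}{\left(\sum_{i\in C}n_i\right)^2},$$ for every coalition $C$ and players $s,l\in C$ with $n_s\le n_l$ the following hold: (P1) $\frac{err_s(C)}{err_l(C)}\ge1$, with $err_s(C)>err_l(C)$ if $n_s<n_l$; (P2) $\frac{err_s(C)}{err_l(C)}\le\frac{err_s(\{n_s,n_l\})}{err_l(\{n_s,n_l\})}$; (P3) $\frac{\partial}{\partial n_l}\frac{err_s(\{n_s,n_l\})}{err_l(\{n_s,n_l\})}\ge0$; (P4) $\frac{\partial}{\partial n_s}\frac{err_s(\{n_s,n_l\})}{err_l(\{n_s,n_l\})}\le0$; (P5) $\lim_{n_s/n_l\to0}\frac{err_s(\{n_s,n_l\})}{err_l(\{n_s,n_l\})}=\frac{\mu_e/n_l+2\sigma^2}{\mu_e/n_l}$.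
   Context: Players $i$ have sample sizes $n_i>0$; a coalition is a set of players. In the mean-estimation model, $\mu_e$ is the average sampling noise (expected variance of a player's sample distribution) and $\sigma^2$ is the variance of players' true means. Under uniform (vanilla) federation, a coalition uses the sample-weighted average of local mean estimates, giving player $j\in C$ the expected squared error in the claim. $err_s(\{n_s,n_l\})$ denotes the error of player $s$ in the two-player coalition $\{s,l\}$, viewed as a function of $n_s,n_l$ (similarly for $l$). *)

theory Defs
  imports Complex_Main
begin

definition err :: "real \<Rightarrow> real \<Rightarrow> ('a \<Rightarrow> real) \<Rightarrow> 'a set \<Rightarrow> 'a \<Rightarrow> real" where
  "err mu s2 n C j =
     mu / (\<Sum>i\<in>C. n i)
     + s2 * ((\<Sum>i\<in>C - {j}. (n i)^2) + (\<Sum>i\<in>C - {j}. n i)^2) / (\<Sum>i\<in>C. n i)^2"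

text \<open>Two-player coalition {s,l}: players are False (= s, size ns) and True (= l, size nl).\<close>
definition pair_sizes :: "real \<Rightarrow> real \<Rightarrow> bool \<Rightarrow> real" where
  "pair_sizes ns nl = (\<lambda>i. if i then nl else ns)"

definition err_s2 :: "real \<Rightarrow> real \<Rightarrow> real \<Rightarrow> real \<Rightarrow> real" where
  "err_s2 mu s2 ns nl = err mu s2 (pair_sizes ns nl) UNIV False"

definition err_l2 :: "real \<Rightarrow> real \<Rightarrow> real \<Rightarrow> real \<Rightarrow> real" where
  "err_l2 mu s2 ns nl = err mu s2 (pair_sizes ns nl) UNIV True"

definition pair_ratio :: "real \<Rightarrow> real \<Rightarrow> real \<Rightarrow> real \<Rightarrow> real" where
  "pair_ratio mu s2 ns nl = err_s2 mu s2 ns nl / err_l2 mu s2 ns nl"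

end

theory Submission
  imports Defs
begin

(* With S and Q the sum and the sum of squares of the sample sizes in C, the error is affine in
   the player's own size: err_j(C) = mu/S + s2 (Q + S^2 - 2 S n_j)/S^2. Hence
   err_s - err_l = 2 s2 (n_l - n_s)/S, which gives (P1), and
   err_s/err_l = 1 + 2 s2 (n_l - n_s)/(S err_l(C)). So (P2) says that S err_l(C) is at least its
   value for the pair {s, l}, an elementary inequality since the other players only enlarge S and Q.
   For the pair the ratio is the rational function
   (mu (n_s + n_l) + 2 s2 n_l^2) / (mu (n_s + n_l) + 2 s2 n_s^2),
   whose partial derivatives have visibly constant signs, and which is continuous at n_s = 0. *)

lemma sum_pos_of_mem:
  fixes n :: "'a \<Rightarrow> real"
  assumes "finite C" "\<forall>i\<in>C. n i > 0" "j \<in> C"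
  shows "sum n C > 0"
  using assms by (intro sum_pos2[of C j]) auto

lemma err_eq:
  fixes n :: "'a \<Rightarrow> real"
  assumes "finite C" "j \<in> C"
  shows "err mu s2 n C j = mu / sum n C
           + s2 * ((\<Sum>i\<in>C. (n i)^2) + (sum n C)^2 - 2 * sum n C * n j) / (sum n C)^2"
proof -
  have "(\<Sum>i\<in>C - {j}. (n i)^2) + (\<Sum>i\<in>C - {j}. n i)^2
          = (\<Sum>i\<in>C. (n i)^2) + (sum n C)^2 - 2 * sum n C * n j"
    using assms by (simp add: sum_diff1 power2_eq_square algebra_simps)
  then show ?thesis
    unfolding err_def by simp
qed

lemma err_diff:
  fixes n :: "'a \<Rightarrow> real"
  assumes "finite C" "s \<in> C" "l \<in> C"
  shows "err mu s2 n C s - err mu s2 n C l = 2 * s2 * (n l - n s) / sum n C"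
  using assms by (cases "sum n C = 0") (simp_all add: err_eq field_simps power2_eq_square)

lemma err_pos:
  fixes n :: "'a \<Rightarrow> real"
  assumes "mu > 0" "s2 \<ge> 0" "finite C" "\<forall>i\<in>C. n i > 0" "j \<in> C"
  shows "err mu s2 n C j > 0"
proof -
  have "sum n C > 0"
    using assms(3-5) by (rule sum_pos_of_mem)
  then show ?thesis
    unfolding err_def using assms
    by (intro add_pos_nonneg divide_nonneg_pos mult_nonneg_nonneg add_nonneg_nonneg sum_nonneg) auto
qed

lemma err_antimono:
  fixes n :: "'a \<Rightarrow> real"
  assumes "s2 \<ge> 0" "finite C" "\<forall>i\<in>C. n i > 0" "s \<in> C" "l \<in> C" "n s \<le> n l"
  shows "err mu s2 n C l \<le> err mu s2 n C s"
proof -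
  have "0 \<le> 2 * s2 * (n l - n s) / sum n C"
    using assms sum_pos_of_mem[of C n l] by (simp add: divide_nonneg_pos)
  then show ?thesis
    using err_diff[of C s l mu s2 n] assms by simp
qed

lemma err_strict_antimono:
  fixes n :: "'a \<Rightarrow> real"
  assumes "s2 > 0" "finite C" "\<forall>i\<in>C. n i > 0" "s \<in> C" "l \<in> C" "n s < n l"
  shows "err mu s2 n C l < err mu s2 n C s"
proof -
  have "0 < 2 * s2 * (n l - n s) / sum n C"
    using assms sum_pos_of_mem[of C n l] by (simp add: divide_pos_pos)
  then show ?thesis
    using err_diff[of C s l mu s2 n] assms by simp
qed

lemma err_s2_eq: "err_s2 mu s2 ns nl = mu / (ns + nl) + 2 * s2 * nl^2 / (ns + nl)^2"
  unfolding err_s2_def err_def pair_sizes_def by (simp add: UNIV_bool add.commute)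

lemma err_l2_eq: "err_l2 mu s2 ns nl = mu / (ns + nl) + 2 * s2 * ns^2 / (ns + nl)^2"
  unfolding err_l2_def err_def pair_sizes_def by (simp add: UNIV_bool add.commute)

lemma pair_ratio_eq:
  assumes "ns + nl \<noteq> 0"
  shows "pair_ratio mu s2 ns nl = (mu * (ns + nl) + 2 * s2 * nl^2) / (mu * (ns + nl) + 2 * s2 * ns^2)"
proof -
  have "err_s2 mu s2 ns nl = (mu * (ns + nl) + 2 * s2 * nl^2) / (ns + nl)^2"
       "err_l2 mu s2 ns nl = (mu * (ns + nl) + 2 * s2 * ns^2) / (ns + nl)^2"
    unfolding err_s2_eq err_l2_eq using assms by (simp_all add: add_divide_distrib power2_eq_square)
  then show ?thesis
    unfolding pair_ratio_def using assms by simp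
qed

lemma two_sq_div_le:
  fixes a b c :: real
  assumes "0 \<le> a" "a \<le> c" "0 \<le> b" "0 < a + b"
  shows "2 * a^2 / (a + b) \<le> (a^2 + c^2) / (b + c)"
proof -
  have "(a^2 + c^2) * (a + b) - 2 * a^2 * (b + c) = a * (c - a)^2 + b * (c - a) * (c + a)"
    by (simp add: algebra_simps power2_eq_square)
  also have "\<dots> \<ge> 0"
    using assms by (intro add_nonneg_nonneg mult_nonneg_nonneg) auto
  finally show ?thesis
    using assms by (simp add: divide_simps)
qed

lemma sum_mult_err_ge:
  fixes n :: "'a \<Rightarrow> real"
  assumes "s2 \<ge> 0" "finite C" "\<forall>i\<in>C. n i > 0" "s \<in> C" "l \<in> C" "s \<noteq> l"
  shows "(n s + n l) * err_l2 mu s2 (n s) (n l) \<le> sum n C * err mu s2 n C l"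
proof -
  let ?S = "sum n C" and ?Q = "\<Sum>i\<in>C. (n i)^2"
  have "sum n {s, l} \<le> ?S" "(\<Sum>i\<in>{s, l}. (n i)^2) \<le> ?Q"
    using assms by (intro sum_mono2; auto)+
  then have S_ge: "n s + n l \<le> ?S" and Q_ge: "(n s)^2 + (n l)^2 \<le> ?Q"
    using assms(6) by simp_all
  have pos: "n s > 0" "n l > 0"
    using assms by simp_all
  have S_pos: "?S > 0"
    using assms(2,3,5) by (rule sum_pos_of_mem)
  have "2 * (n s)^2 / (n s + n l) \<le> ((n s)^2 + (?S - n l)^2) / ?S"
    using pos S_ge two_sq_div_le[of "n s" "?S - n l" "n l"] by simp
  also have "\<dots> \<le> (?Q + ?S^2 - 2 * ?S * n l) / ?S"
    using S_pos Q_ge by (intro divide_right_mono) (simp_all add: power2_diff)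
  finally have "s2 * (2 * (n s)^2 / (n s + n l)) \<le> s2 * ((?Q + ?S^2 - 2 * ?S * n l) / ?S)"
    using assms(1) by (rule mult_left_mono)
  moreover have "(n s + n l) * err_l2 mu s2 (n s) (n l) = mu + s2 * (2 * (n s)^2 / (n s + n l))"
    using pos unfolding err_l2_eq distrib_left by (simp add: power2_eq_square)
  moreover have "?S * err mu s2 n C l = mu + s2 * ((?Q + ?S^2 - 2 * ?S * n l) / ?S)"
    using assms S_pos by (simp add: err_eq field_simps power2_eq_square)
  ultimately show ?thesis
    by simp
qed

lemma err_ratio_eq:
  fixes n :: "'a \<Rightarrow> real"
  assumes "mu > 0" "s2 \<ge> 0" "finite C" "\<forall>i\<in>C. n i > 0" "s \<in> C" "l \<in> C"
  shows "err mu s2 n C s / err mu s2 n C l = 1 + 2 * s2 * (n l - n s) / (sum n C * err mu s2 n C l)"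
  using err_diff[of C s l mu s2 n] err_pos[of mu s2 C n l] sum_pos_of_mem[of C n l] assms
  by (simp add: field_simps)

lemma pair_ratio_eq_err_ratio:
  assumes "mu > 0" "s2 \<ge> 0" "0 < ns" "0 < nl"
  shows "pair_ratio mu s2 ns nl = 1 + 2 * s2 * (nl - ns) / ((ns + nl) * err_l2 mu s2 ns nl)"
proof -
  have "sum (pair_sizes ns nl) UNIV = ns + nl"
    by (simp add: pair_sizes_def UNIV_bool)
  then show ?thesis
    using err_ratio_eq[of mu s2 UNIV "pair_sizes ns nl" False True] assms
    unfolding pair_ratio_def err_s2_def err_l2_def by (simp add: pair_sizes_def)
qed

lemma err_ratio_le_pair_ratio:
  fixes n :: "'a \<Rightarrow> real"
  assumes "mu > 0" "s2 \<ge> 0" "finite C" "\<forall>i\<in>C. n i > 0" "s \<in> C" "l \<in> C" "n s \<le> n l"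
  shows "err mu s2 n C s / err mu s2 n C l \<le> pair_ratio mu s2 (n s) (n l)"
proof -
  have pos: "n s > 0" "n l > 0"
    using assms by simp_all
  have "2 * s2 * (n l - n s) / (sum n C * err mu s2 n C l)
          \<le> 2 * s2 * (n l - n s) / ((n s + n l) * err_l2 mu s2 (n s) (n l))"
  proof (cases "s = l")
    case False
    have "err_l2 mu s2 (n s) (n l) > 0"
      unfolding err_l2_def using assms(1,2) pos by (intro err_pos) (auto simp: pair_sizes_def)
    then show ?thesis
      using assms pos False sum_mult_err_ge[of s2 C n s l mu]
        err_pos[of mu s2 C n l] sum_pos_of_mem[of C n l]
      by (intro divide_left_mono mult_pos_pos) auto
  qed simp
  then show ?thesis
    using err_ratio_eq[OF assms(1-6)] pair_ratio_eq_err_ratio[OF assms(1,2) pos] by simp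
qed

lemma pair_ratio_has_derivative_nl:
  assumes "mu > 0" "s2 \<ge> 0" "0 < ns" "0 < nl"
  shows "((\<lambda>x. pair_ratio mu s2 ns x) has_real_derivative
           (2 * mu * s2 * (ns + nl)^2 + 8 * s2^2 * ns^2 * nl) / (mu * (ns + nl) + 2 * s2 * ns^2)^2) (at nl)"
proof -
  have "mu * (ns + nl) + 2 * s2 * ns^2 > 0"
    using assms by (intro add_pos_nonneg) auto
  then have "((\<lambda>x. (mu * (ns + x) + 2 * s2 * x^2) / (mu * (ns + x) + 2 * s2 * ns^2)) has_real_derivative
           (2 * mu * s2 * (ns + nl)^2 + 8 * s2^2 * ns^2 * nl) / (mu * (ns + nl) + 2 * s2 * ns^2)^2) (at nl)"
    by (auto intro!: derivative_eq_intros simp: field_simps power2_eq_square)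
  then show ?thesis
    by (rule has_field_derivative_transform_within_open[where S = "{0<..}"])
       (use assms pair_ratio_eq in auto)
qed

lemma pair_ratio_has_derivative_ns:
  assumes "mu > 0" "s2 \<ge> 0" "0 < ns" "0 < nl"
  shows "((\<lambda>x. pair_ratio mu s2 x nl) has_real_derivative
           - ((2 * mu * s2 * (ns + nl)^2 + 8 * s2^2 * ns * nl^2) / (mu * (ns + nl) + 2 * s2 * ns^2)^2)) (at ns)"
proof -
  have "mu * (ns + nl) + 2 * s2 * ns^2 > 0"
    using assms by (intro add_pos_nonneg) auto
  then have "((\<lambda>x. (mu * (x + nl) + 2 * s2 * nl^2) / (mu * (x + nl) + 2 * s2 * x^2)) has_real_derivative
           - (2 * mu * s2 * (ns + nl)^2 + 8 * s2^2 * ns * nl^2) / (mu * (ns + nl) + 2 * s2 * ns^2)^2) (at ns)"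
    by (auto intro!: derivative_eq_intros simp: field_simps power2_eq_square)
  then show ?thesis
    unfolding minus_divide_left by (rule has_field_derivative_transform_within_open[where S = "{0<..}"])
       (use assms pair_ratio_eq in auto)
qed

lemma tendsto_pair_ratio_at_right_0:
  assumes "mu > 0" "0 < nl"
  shows "((\<lambda>ns. pair_ratio mu s2 ns nl) \<longlongrightarrow> 1 + 2 * s2 * nl / mu) (at_right 0)"
proof -
  have "((\<lambda>x. (mu * (x + nl) + 2 * s2 * nl^2) / (mu * (x + nl) + 2 * s2 * x^2)) \<longlongrightarrow>
          (mu * (0 + nl) + 2 * s2 * nl^2) / (mu * (0 + nl) + 2 * s2 * 0^2)) (at_right 0)"
    using assms by (intro tendsto_intros) auto
  moreover have "(mu * (0 + nl) + 2 * s2 * nl^2) / (mu * (0 + nl) + 2 * s2 * 0^2) = 1 + 2 * s2 * nl / mu"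
    using assms by (simp add: field_simps power2_eq_square)
  moreover have "\<forall>\<^sub>F x in at_right 0. (mu * (x + nl) + 2 * s2 * nl^2) / (mu * (x + nl) + 2 * s2 * x^2)
                   = pair_ratio mu s2 x nl"
    using eventually_at_right_less[of 0] by eventually_elim (use assms pair_ratio_eq in auto)
  ultimately show ?thesis
    using Lim_transform_eventually by fastforce
qed

theorem lemma4p4:
  fixes mu s2 :: real
  assumes mu_pos: "mu > 0" and s2_pos: "s2 > 0"
  shows
    \<comment> \<open>(P1) and (P2), for every coalition C and players s, l in C with n_s <= n_l\<close>
    "(\<forall>(C :: 'a set) (n :: 'a \<Rightarrow> real) s l.
        finite C \<longrightarrow> (\<forall>i\<in>C. n i > 0) \<longrightarrow> s \<in> C \<longrightarrow> l \<in> C \<longrightarrow> n s \<le> n l \<longrightarrow>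
          err mu s2 n C s / err mu s2 n C l \<ge> 1
          \<and> (n s < n l \<longrightarrow> err mu s2 n C s > err mu s2 n C l)
          \<and> err mu s2 n C s / err mu s2 n C l \<le> pair_ratio mu s2 (n s) (n l))
     \<and> \<comment> \<open>(P3)\<close>
     (\<forall>ns nl. 0 < ns \<longrightarrow> ns \<le> nl \<longrightarrow>
        (\<exists>D. ((\<lambda>x. pair_ratio mu s2 ns x) has_real_derivative D) (at nl) \<and> D \<ge> 0))
     \<and> \<comment> \<open>(P4)\<close>
     (\<forall>ns nl. 0 < ns \<longrightarrow> ns \<le> nl \<longrightarrow>
        (\<exists>D. ((\<lambda>x. pair_ratio mu s2 x nl) has_real_derivative D) (at ns) \<and> D \<le> 0))
     \<and> \<comment> \<open>(P5): n_l fixed, n_s / n_l \<rightarrow> 0, i.e. n_s \<rightarrow> 0+\<close>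
     (\<forall>nl. 0 < nl \<longrightarrow>
        ((\<lambda>ns. pair_ratio mu s2 ns nl) \<longlongrightarrow> (mu / nl + 2 * s2) / (mu / nl)) (at_right 0))"
proof (intro conjI allI impI)
  fix C :: "'a set" and n :: "'a \<Rightarrow> real" and s l
  assume coalition: "finite C" "\<forall>i\<in>C. n i > 0" "s \<in> C" "l \<in> C" and le: "n s \<le> n l"
  show "err mu s2 n C s / err mu s2 n C l \<ge> 1"
    using err_antimono[OF less_imp_le[OF s2_pos] coalition le]
      err_pos[OF mu_pos less_imp_le[OF s2_pos] coalition(1,2,4)] by simp
  show "err mu s2 n C s > err mu s2 n C l" if "n s < n l"
    using err_strict_antimono[OF s2_pos coalition that] .
  show "err mu s2 n C s / err mu s2 n C l \<le> pair_ratio mu s2 (n s) (n l)"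
    using err_ratio_le_pair_ratio[OF mu_pos less_imp_le[OF s2_pos] coalition le] .
next
  fix ns nl :: real
  assume "0 < ns" "ns \<le> nl"
  then show "\<exists>D. ((\<lambda>x. pair_ratio mu s2 ns x) has_real_derivative D) (at nl) \<and> D \<ge> 0"
    using pair_ratio_has_derivative_nl[of mu s2 ns nl] mu_pos s2_pos by fastforce
next
  fix ns nl :: real
  assume "0 < ns" "ns \<le> nl"
  then show "\<exists>D. ((\<lambda>x. pair_ratio mu s2 x nl) has_real_derivative D) (at ns) \<and> D \<le> 0"
    using pair_ratio_has_derivative_ns[of mu s2 ns nl] mu_pos s2_pos by fastforce
next
  fix nl :: real
  assume "0 < nl"
  moreover have "(mu / nl + 2 * s2) / (mu / nl) = 1 + 2 * s2 * nl / mu"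
    using mu_pos \<open>0 < nl\<close> by (simp add: field_simps)
  ultimately show "((\<lambda>ns. pair_ratio mu s2 ns nl) \<longlongrightarrow> (mu / nl + 2 * s2) / (mu / nl)) (at_right 0)"
    using tendsto_pair_ratio_at_right_0[OF mu_pos] by simp
qed

end
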